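(* Let $X_1,\dots,X_n\in\mathbb{R}$ and $1\le k\le n$. Let $\mathcal{I}\subseteq\{1,\dots,n\}$ with $|\mathcal{I}|=k$ be any subset minimizing the sum of squared deviations $\sum_{i\in\mathcal{I}}X_i^2-\frac{1}{k}\left(\sum_{i\in\mathcal{I}}X_i\right)^2$ over all $k$-subsets, and let $\mathcal{O}=\{1,\dots,n\}\setminus\mathcal{I}$. Then $\mathcal{I}$ and $\mathcal{O}$ are quadratically separable: there exist $w\in\mathbb{R}^2\setminus\{0\}$ and $b\in\mathbb{R}$ such that $w^\top(X_i^2,X_i)\le b$ for all $i\in\mathcal{I}$ and $w^\top(X_o^2,X_o)\ge b$ for all $o\in\mathcal{O}$.
   Context: Quadratic separability means linear separability of the two point sets after lifting each real number $x$ to $\mathcal{L}_2(x)=(x^2,x)\in\mathbb{R}^2$; two point sets $A,B\subseteq\mathbb{R}^2$ are linearly separable if there are $w\in\mathbb{R}^2$ and $b\in\mathbb{R}$ with $w^\top a\ge b$ for all $a\in A$ and $w^\top p\le b$ for all $p\in B$. *)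

theory Defs
  imports "HOL-Analysis.Analysis"
begin

definition quad_lift :: "real \<Rightarrow> real \<times> real" where
  "quad_lift x = (x ^ 2, x)"

definition ssd :: "(nat \<Rightarrow> real) \<Rightarrow> nat \<Rightarrow> nat set \<Rightarrow> real" where
  "ssd X k I = (\<Sum>i\<in>I. (X i)\<^sup>2) - (1 / real k) * (\<Sum>i\<in>I. X i)\<^sup>2"

end

theory Submission
  imports Defs
begin

text \<open>Let \<open>m\<close> be the mean of the \<open>X i\<close> over \<open>I\<close> and \<open>g x = x\<^sup>2 - 2 m x\<close>. Exchanging an
  index \<open>i \<in> I\<close> for an outside index \<open>p\<close> changes the sum of squared deviations by
  \<open>g (X p) - g (X i) - (X p - X i)\<^sup>2 / k\<close>, so minimality of \<open>I\<close> forces \<open>g (X i) \<le> g (X p)\<close>.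
  Since \<open>g x = (1, -2 m) \<bullet> (x\<^sup>2, x)\<close>, any threshold between the values of \<open>g\<close> on \<open>I\<close> and on
  its complement separates the two lifted point sets.\<close>

lemma ssd_exchange:
  fixes X :: "nat \<Rightarrow> real" and k :: nat
  assumes "finite I" "i \<in> I" "p \<notin> I"
  defines "m \<equiv> (\<Sum>j\<in>I. X j) / real k"
  shows "ssd X k (insert p (I - {i})) - ssd X k I =
           ((X p)\<^sup>2 - 2 * m * X p) - ((X i)\<^sup>2 - 2 * m * X i) - (X p - X i)\<^sup>2 / real k"
proof -
  define S where "S = (\<Sum>j\<in>I. X j)"
  have sum_exchange: "(\<Sum>j\<in>insert p (I - {i}). f j) = (\<Sum>j\<in>I. f j) - f i + f p"
    for f :: "nat \<Rightarrow> real"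
    using assms(1-3) by (simp add: sum.remove)
  have square_exchange: "(S - X i + X p)\<^sup>2 - S\<^sup>2 = 2 * S * X p - 2 * S * X i + (X p - X i)\<^sup>2"
    by (simp add: power2_eq_square algebra_simps)
  have "ssd X k (insert p (I - {i})) - ssd X k I
          = (X p)\<^sup>2 - (X i)\<^sup>2 - ((S - X i + X p)\<^sup>2 - S\<^sup>2) / real k"
    unfolding ssd_def sum_exchange S_def by (simp add: diff_divide_distrib)
  also have "\<dots> = (X p)\<^sup>2 - (X i)\<^sup>2 - (2 * S * X p - 2 * S * X i + (X p - X i)\<^sup>2) / real k"
    unfolding square_exchange ..
  also have "\<dots> = ((X p)\<^sup>2 - 2 * m * X p) - ((X i)\<^sup>2 - 2 * m * X i) - (X p - X i)\<^sup>2 / real k"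
    unfolding m_def S_def[symmetric] by (simp add: add_divide_distrib diff_divide_distrib)
  finally show ?thesis .
qed

lemma ssd_exchange_le_imp:
  fixes X :: "nat \<Rightarrow> real" and k :: nat
  assumes "finite I" "i \<in> I" "p \<notin> I"
    and "ssd X k I \<le> ssd X k (insert p (I - {i}))"
  defines "m \<equiv> (\<Sum>j\<in>I. X j) / real k"
  shows "(X i)\<^sup>2 - 2 * m * X i \<le> (X p)\<^sup>2 - 2 * m * X p"
proof -
  have "0 \<le> (X p - X i)\<^sup>2 / real k" by simp
  then show ?thesis
    using ssd_exchange[OF assms(1-3), of X k] assms(4) unfolding m_def by linarith
qed

lemma card_exchange:
  assumes "finite I" "i \<in> I" "p \<notin> I"
  shows "card (insert p (I - {i})) = card I"
proof -
  have "card (insert p (I - {i})) = Suc (card (I - {i}))"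
    using assms by simp
  also have "\<dots> = card I"
    using card.remove[OF assms(1,2)] by simp
  finally show ?thesis .
qed

lemma inner_quad_lift: "(a, c) \<bullet> quad_lift x = a * x\<^sup>2 + c * x"
  by (simp add: quad_lift_def inner_prod_def)

lemma threshold_between:
  fixes f :: "'a \<Rightarrow> real"
  assumes "finite A" "A \<noteq> {}" "\<And>a p. a \<in> A \<Longrightarrow> p \<in> B \<Longrightarrow> f a \<le> f p"
  shows "\<exists>b. (\<forall>a\<in>A. f a \<le> b) \<and> (\<forall>p\<in>B. b \<le> f p)"
proof (intro exI conjI ballI)
  show "f a \<le> Max (f ` A)" if "a \<in> A" for a
    using assms(1) that by simp
  show "Max (f ` A) \<le> f p" if "p \<in> B" for p
    using assms that by (simp add: Max_le_iff)
qed

theorem theorem3: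
  fixes X :: "nat \<Rightarrow> real" and n k :: nat and I :: "nat set"
  assumes "1 \<le> k" and "k \<le> n"
    and "I \<subseteq> {1..n}" and "card I = k"
    and "\<And>J. J \<subseteq> {1..n} \<Longrightarrow> card J = k \<Longrightarrow> ssd X k I \<le> ssd X k J"
  shows "\<exists>(w :: real \<times> real) (b :: real). w \<noteq> 0 \<and>
           (\<forall>i\<in>I. w \<bullet> quad_lift (X i) \<le> b) \<and>
           (\<forall>j\<in>{1..n} - I. w \<bullet> quad_lift (X j) \<ge> b)"
proof -
  have fin: "finite I" and nonempty: "I \<noteq> {}"
    using assms(1,3,4) finite_subset by auto
  define m where "m = (\<Sum>j\<in>I. X j) / real k"
  define w where "w = (1 :: real, - 2 * m)"
  have "w \<bullet> quad_lift (X i) \<le> w \<bullet> quad_lift (X p)" if "i \<in> I" "p \<in> {1..n} - I" for i p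
  proof -
    have "insert p (I - {i}) \<subseteq> {1..n}" using that assms(3) by auto
    moreover have "card (insert p (I - {i})) = k" using that assms(4) card_exchange[OF fin] by auto
    ultimately have "ssd X k I \<le> ssd X k (insert p (I - {i}))" using assms(5) by blast
    moreover have "p \<notin> I" using that(2) by simp
    ultimately have "(X i)\<^sup>2 - 2 * m * X i \<le> (X p)\<^sup>2 - 2 * m * X p"
      unfolding m_def using ssd_exchange_le_imp[OF fin that(1)] by simp
    then show ?thesis unfolding w_def inner_quad_lift by simp
  qed
  then obtain b where "\<forall>i\<in>I. w \<bullet> quad_lift (X i) \<le> b"
      and "\<forall>j\<in>{1..n} - I. b \<le> w \<bullet> quad_lift (X j)"
    using threshold_between[OF fin nonempty,
        where f = "\<lambda>j. w \<bullet> quad_lift (X j)" and B = "{1..n} - I"]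
    by blast
  moreover have "w \<noteq> 0" by (simp add: w_def zero_prod_def)
  ultimately show ?thesis by (intro exI[of _ w] exI[of _ b]) simp
qed

end
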